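(* For every $n\ge 0$, the number of left-walks of length $2n$ equals the number of right-walks of length $2n$.
   Context: All walks are finite sequences of unit steps from $\{N,E,S,W\}=\{(0,1),(1,0),(0,-1),(-1,0)\}$ on $\mathbb{Z}^2$, starting at $(0,0)$. A walk is \emph{eager} if it contains no two consecutive steps $E$ then $S$, and no two consecutive steps $N$ then $W$. A \emph{QP-subloop} of a walk is a contiguous subsequence of steps starting and ending at the same point $(p,q)$ and visiting only points $(x,y)$ with $x\ge p$, $y\ge q$. A walk is \emph{standard} if every QP-subloop (of positive length) begins with an $N$ step. A \emph{big-walk} is a standard eager walk staying in the half-plane $\{x+y\ge 0\}$ and ending at some point $(x,-x)$. A \emph{left-walk} is a big-walk ending at a point $(x,-x)$ with $x\le 0$; a \emph{right-walk} is a big-walk ending at a point $(x,-x)$ with $x\ge 0$. *)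

theory Defs
  imports Main
begin

datatype step = N | E | S | W

fun dx :: "step \<Rightarrow> int" where
  "dx N = 0" | "dx E = 1" | "dx S = 0" | "dx W = -1"

fun dy :: "step \<Rightarrow> int" where
  "dy N = 1" | "dy E = 0" | "dy S = -1" | "dy W = 0"

definition pos :: "step list \<Rightarrow> nat \<Rightarrow> int \<times> int" where
  "pos w i = (sum_list (map dx (take i w)), sum_list (map dy (take i w)))"

definition eager :: "step list \<Rightarrow> bool" where
  "eager w \<longleftrightarrow> (\<forall>i. Suc i < length w \<longrightarrow>
      \<not> (w ! i = E \<and> w ! Suc i = S) \<and> \<not> (w ! i = N \<and> w ! Suc i = W))"

text \<open>Steps i+1..j (0-based indices i..j-1) form a QP-subloop.\<close>
definition qp_subloop :: "step list \<Rightarrow> nat \<Rightarrow> nat \<Rightarrow> bool" where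
  "qp_subloop w i j \<longleftrightarrow> i \<le> j \<and> j \<le> length w \<and> pos w i = pos w j \<and>
     (\<forall>k. i \<le> k \<and> k \<le> j \<longrightarrow>
        fst (pos w k) \<ge> fst (pos w i) \<and> snd (pos w k) \<ge> snd (pos w i))"

definition standard :: "step list \<Rightarrow> bool" where
  "standard w \<longleftrightarrow> (\<forall>i j. i < j \<and> qp_subloop w i j \<longrightarrow> w ! i = N)"

definition big_walk :: "step list \<Rightarrow> bool" where
  "big_walk w \<longleftrightarrow> standard w \<and> eager w \<and>
     (\<forall>k \<le> length w. fst (pos w k) + snd (pos w k) \<ge> 0) \<and>
     fst (pos w (length w)) + snd (pos w (length w)) = 0"

definition left_walk :: "step list \<Rightarrow> bool" where
  "left_walk w \<longleftrightarrow> big_walk w \<and> fst (pos w (length w)) \<le> 0"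

definition right_walk :: "step list \<Rightarrow> bool" where
  "right_walk w \<longleftrightarrow> big_walk w \<and> fst (pos w (length w)) \<ge> 0"

end

(*
  Reflect in the diagonal x = y every step of the walk that lies in no QP-subloop.  This is the
  same as reflecting the whole walk and then reflecting back each maximal QP-subloop about the
  diagonal through its base point.  Such a reflection keeps a loop based at p inside the quadrant
  at p and does not change which segments are QP-subloops; hence the reflected steps are the same
  for the image, and the map is an involution.  It preserves x + y along the walk, standardness
  (a QP-subloop is not touched), and eagerness: a QP-subloop starts with N or E and ends with S or
  W, and the reflection exchanges the forbidden pairs ES and NW.  Finally it sends the end point
  (x, -x) to (-x, x), so it exchanges left-walks and right-walks of each length.
*)

theory Submission
  imports Defs "HOL-Library.Product_Order" "HOL-Library.Product_Plus" "HOL-Library.Disjoint_Sets"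
begin

fun swap_step :: "step \<Rightarrow> step" where
  "swap_step N = E" | "swap_step E = N" | "swap_step S = W" | "swap_step W = S"

definition step_vec :: "step \<Rightarrow> int \<times> int" where
  "step_vec s = (dx s, dy s)"

lemma swap_step_swap_step [simp]: "swap_step (swap_step s) = s"
  by (cases s) auto

lemma step_vec_swap_step [simp]: "step_vec (swap_step s) = prod.swap (step_vec s)"
  by (cases s) (auto simp: step_vec_def)

lemma pos_0 [simp]: "pos w 0 = 0"
  by (simp add: pos_def zero_prod_def)

lemma pos_Suc:
  "pos w (Suc k) = (if k < length w then pos w k + step_vec (w ! k) else pos w k)"
  by (simp add: pos_def step_vec_def take_Suc_conv_app_nth)

lemma pos_map_swap_step: "pos (map swap_step w) k = prod.swap (pos w k)"
  by (induction k) (auto simp: pos_Suc prod_eq_iff)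

definition reflect_about :: "int \<times> int \<Rightarrow> int \<times> int \<Rightarrow> int \<times> int" where
  "reflect_about p q = p + prod.swap (q - p)"

lemma reflect_about_self [simp]: "reflect_about p p = p"
  by (simp add: reflect_about_def zero_prod_def)

lemma reflect_about_reflect_about [simp]: "reflect_about p (reflect_about p q) = q"
  by (simp add: reflect_about_def prod_eq_iff)

lemma reflect_about_add: "reflect_about p (q + v) = reflect_about p q + prod.swap v"
  by (simp add: reflect_about_def prod_eq_iff)

lemma reflect_about_le_iff [simp]: "reflect_about p q \<le> reflect_about p r \<longleftrightarrow> q \<le> r"
  by (auto simp: reflect_about_def less_eq_prod_def)

lemma le_reflect_about_iff [simp]: "p \<le> reflect_about p q \<longleftrightarrow> p \<le> q"
  using reflect_about_le_iff[of p p q] by simp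

definition quadrant_loop :: "(nat \<Rightarrow> int \<times> int) \<Rightarrow> nat \<Rightarrow> nat \<Rightarrow> bool" where
  "quadrant_loop P i j \<longleftrightarrow> i \<le> j \<and> P j = P i \<and> (\<forall>k\<in>{i..j}. P i \<le> P k)"

lemma qp_subloop_iff_quadrant_loop:
  "qp_subloop w i j \<longleftrightarrow> quadrant_loop (pos w) i j \<and> j \<le> length w"
  by (auto simp: qp_subloop_def quadrant_loop_def less_eq_prod_def)

lemma quadrant_loop_cong:
  "(\<And>k. i \<le> k \<Longrightarrow> k \<le> j \<Longrightarrow> P k = Q k) \<Longrightarrow> quadrant_loop P i j \<longleftrightarrow> quadrant_loop Q i j"
  unfolding quadrant_loop_def by auto

lemma quadrant_loop_union:
  assumes "quadrant_loop P i j" "quadrant_loop P a b" "a \<le> j" "i \<le> b"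
  shows "quadrant_loop P (min i a) (max j b)"
proof -
  have extend: "quadrant_loop P i (max j b)"
    if ij: "quadrant_loop P i j" and ab: "quadrant_loop P a b" and "i \<le> a" "a \<le> j" for i j a b
  proof (cases "b \<le> j")
    case True
    with ij show ?thesis by (simp add: max_def)
  next
    case False
    have "P i \<le> P a" using ij \<open>i \<le> a\<close> \<open>a \<le> j\<close> by (simp add: quadrant_loop_def)
    moreover have "P a \<le> P j" using ab \<open>a \<le> j\<close> False by (simp add: quadrant_loop_def)
    moreover have "P j = P i" using ij by (simp add: quadrant_loop_def)
    ultimately have "P a = P i" by simp
    with that False show ?thesis
      unfolding quadrant_loop_def by (metis atLeastAtMost_iff max.absorb2 nat_le_linear order.trans)
  qed
  show ?thesis
  proof (cases "i \<le> a")
    case True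
    with extend[OF assms(1,2)] assms show ?thesis by (simp add: min_def)
  next
    case False
    with extend[OF assms(2,1)] assms show ?thesis by (simp add: min_def max.commute)
  qed
qed

definition reflect_segment :: "(nat \<Rightarrow> int \<times> int) \<Rightarrow> nat \<Rightarrow> nat \<Rightarrow> nat \<Rightarrow> int \<times> int" where
  "reflect_segment P a b k = (if k \<in> {a..b} then reflect_about (P a) (P k) else P k)"

lemma reflect_segment_reflect_segment [simp]: "reflect_segment (reflect_segment P a b) a b = P"
  by (auto simp: reflect_segment_def)

lemma reflect_segment_at_end:
  "P b = P a \<Longrightarrow> k \<notin> {a<..<b} \<Longrightarrow> reflect_segment P a b k = P k"
  by (auto simp: reflect_segment_def)

lemma quadrant_loop_reflect_segment_inside:
  assumes "quadrant_loop P i j" "a \<le> i" "j \<le> b"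
  shows "quadrant_loop (reflect_segment P a b) i j"
proof -
  have "quadrant_loop (reflect_segment P a b) i j \<longleftrightarrow> quadrant_loop (reflect_about (P a) \<circ> P) i j"
    using assms(2,3) by (intro quadrant_loop_cong) (simp add: reflect_segment_def)
  with assms(1) show ?thesis by (simp add: quadrant_loop_def)
qed

lemma quadrant_loop_reflect_segment_overlap:
  assumes ij: "quadrant_loop P i j" and ab: "quadrant_loop P a b"
    and ends: "reflect_segment P a b i = P i" "reflect_segment P a b j = P j"
    and below: "P i \<le> P a"
  shows "quadrant_loop (reflect_segment P a b) i j"
  unfolding quadrant_loop_def
proof (intro conjI ballI)
  fix k assume k: "k \<in> {i..j}"
  show "reflect_segment P a b i \<le> reflect_segment P a b k"
  proof (cases "k \<in> {a..b}")
    case True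
    with ab have "P a \<le> reflect_segment P a b k" by (simp add: reflect_segment_def quadrant_loop_def)
    with below ends show ?thesis by simp
  next
    case False
    then have "reflect_segment P a b k = P k" by (auto simp: reflect_segment_def)
    with ij k ends show ?thesis by (simp add: quadrant_loop_def)
  qed
qed (use ij ends in \<open>auto simp: quadrant_loop_def\<close>)

lemma quadrant_loop_reflect_segment:
  assumes ab: "quadrant_loop P a b" and ij: "quadrant_loop P i j"
  shows "quadrant_loop (reflect_segment P a b) i j"
proof -
  have Pb: "P b = P a" and Pab: "\<And>k. k \<in> {a..b} \<Longrightarrow> P a \<le> P k"
    using ab by (auto simp: quadrant_loop_def)
  have Pj: "P j = P i" and Pij: "\<And>k. k \<in> {i..j} \<Longrightarrow> P i \<le> P k"
    using ij by (auto simp: quadrant_loop_def)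
  consider "a \<le> i" "j \<le> b" | "j < a \<or> b < i" | "i < a" "a \<le> j" | "a \<le> i" "i \<le> b" "b < j"
    by linarith
  then show ?thesis
  proof cases
    case 1
    with ij show ?thesis by (rule quadrant_loop_reflect_segment_inside)
  next
    case 2
    with ij show ?thesis
      by (subst quadrant_loop_cong[where Q = P]) (auto simp: reflect_segment_def)
  next
    case 3
    then have "P i \<le> P a" using Pij by simp
    moreover have "reflect_segment P a b j = P j"
    proof (cases "b < j")
      case False
      with 3 Pab have "P a \<le> P j" by simp
      with \<open>P i \<le> P a\<close> Pj have "P j = P a" by simp
      then show ?thesis by (simp add: reflect_segment_def)
    qed (simp add: reflect_segment_def)
    moreover have "reflect_segment P a b i = P i" using 3 by (simp add: reflect_segment_def)
    ultimately show ?thesis by (intro quadrant_loop_reflect_segment_overlap[OF ij ab])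
  next
    case 4
    then have "P a \<le> P i" "P i \<le> P a" using Pab Pij[of b] Pb by simp_all
    then have "P i = P a" by simp
    moreover have "reflect_segment P a b j = P j" using 4 by (simp add: reflect_segment_def)
    ultimately show ?thesis
      by (intro quadrant_loop_reflect_segment_overlap[OF ij ab]) (simp_all add: reflect_segment_def)
  qed
qed

lemma quadrant_loop_reflect_segment_iff:
  assumes "quadrant_loop P a b"
  shows "quadrant_loop (reflect_segment P a b) i j \<longleftrightarrow> quadrant_loop P i j"
proof
  have reflected: "quadrant_loop (reflect_segment P a b) a b"
    by (rule quadrant_loop_reflect_segment[OF assms assms])
  show "quadrant_loop P i j" if "quadrant_loop (reflect_segment P a b) i j"
    using quadrant_loop_reflect_segment[OF reflected that] by simp
qed (rule quadrant_loop_reflect_segment[OF assms])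

definition swap_steps :: "nat set \<Rightarrow> step list \<Rightarrow> step list" where
  "swap_steps A w = map (\<lambda>k. if k \<in> A then swap_step (w ! k) else w ! k) [0..<length w]"

lemma length_swap_steps [simp]: "length (swap_steps A w) = length w"
  by (simp add: swap_steps_def)

lemma nth_swap_steps [simp]:
  "k < length w \<Longrightarrow> swap_steps A w ! k = (if k \<in> A then swap_step (w ! k) else w ! k)"
  by (simp add: swap_steps_def)

lemma swap_steps_empty [simp]: "swap_steps {} w = w"
  by (rule nth_equalityI) auto

lemma swap_steps_swap_steps:
  "A \<inter> B = {} \<Longrightarrow> swap_steps A (swap_steps B w) = swap_steps (A \<union> B) w"
  by (rule nth_equalityI) auto

lemma pos_swap_steps_loop:
  assumes "pos w b = pos w a" "a \<le> b"
  shows "pos (swap_steps {a..<b} w) k = reflect_segment (pos w) a b k"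
proof (induction k)
  case 0
  then show ?case by (simp add: reflect_segment_def)
next
  case (Suc k)
  show ?case
  proof (cases "k \<in> {a..<b}")
    case True
    with Suc show ?thesis by (auto simp: pos_Suc reflect_segment_def reflect_about_add)
  next
    case False
    then have "k \<notin> {a<..<b}" "Suc k \<notin> {a<..<b}" by auto
    with Suc False show ?thesis by (auto simp: pos_Suc reflect_segment_at_end assms)
  qed
qed

lemma swap_steps_qp_subloop:
  assumes "qp_subloop w a b"
  shows "qp_subloop (swap_steps {a..<b} w) = qp_subloop w"
    and "pos (swap_steps {a..<b} w) (length w) = pos w (length w)"
proof -
  have loop: "quadrant_loop (pos w) a b" and "b \<le> length w"
    using assms by (auto simp: qp_subloop_iff_quadrant_loop)
  then have pos_eq: "pos (swap_steps {a..<b} w) = reflect_segment (pos w) a b"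
    by (intro ext pos_swap_steps_loop) (auto simp: quadrant_loop_def)
  show "qp_subloop (swap_steps {a..<b} w) = qp_subloop w"
    by (intro ext) (simp add: qp_subloop_iff_quadrant_loop pos_eq quadrant_loop_reflect_segment_iff[OF loop])
  show "pos (swap_steps {a..<b} w) (length w) = pos w (length w)"
    using loop \<open>b \<le> length w\<close> by (simp add: pos_eq reflect_segment_at_end quadrant_loop_def)
qed

lemma swap_steps_disjoint_qp_subloops:
  assumes "finite L" "disjoint_family_on (\<lambda>(a, b). {a..<b}) L" "\<forall>(a, b)\<in>L. qp_subloop w a b"
  shows "qp_subloop (swap_steps (\<Union>(a, b)\<in>L. {a..<b}) w) = qp_subloop w \<and>
    pos (swap_steps (\<Union>(a, b)\<in>L. {a..<b}) w) (length w) = pos w (length w)"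
  using assms
proof (induction L rule: finite_induct)
  case (insert ab L)
  obtain a b where ab: "ab = (a, b)" by fastforce
  let ?U = "\<Union>(a, b)\<in>L. {a..<b}"
  have "{a..<b} \<inter> ?U = {}" "disjoint_family_on (\<lambda>(a, b). {a..<b}) L"
    using insert.prems(1) insert.hyps(2) by (simp_all add: disjoint_family_on_insert ab)
  then have IH: "qp_subloop (swap_steps ?U w) = qp_subloop w"
      "pos (swap_steps ?U w) (length w) = pos w (length w)"
    using insert by auto
  have "swap_steps (\<Union>(a, b)\<in>insert ab L. {a..<b}) w = swap_steps {a..<b} (swap_steps ?U w)"
    using swap_steps_swap_steps[OF \<open>{a..<b} \<inter> ?U = {}\<close>] by (simp add: ab)
  moreover have "qp_subloop (swap_steps ?U w) a b"
    using IH insert.prems(2) by (simp add: ab)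
  ultimately show ?case
    using swap_steps_qp_subloop[of "swap_steps ?U w" a b] IH by simp
qed simp

lemma qp_subloop_union:
  assumes "qp_subloop w i j" "qp_subloop w a b" "a \<le> j" "i \<le> b"
  shows "qp_subloop w (min i a) (max j b)"
  using assms quadrant_loop_union[of "pos w" i j a b] by (simp add: qp_subloop_iff_quadrant_loop)

definition covered_steps :: "step list \<Rightarrow> nat set" where
  "covered_steps w = {k. \<exists>i j. qp_subloop w i j \<and> i \<le> k \<and> k < j}"

definition maximal_qp_subloops :: "step list \<Rightarrow> (nat \<times> nat) set" where
  "maximal_qp_subloops w = {(a, b). qp_subloop w a b \<and>
     (\<forall>i j. qp_subloop w i j \<and> i < b \<and> a < j \<longrightarrow> a \<le> i \<and> j \<le> b)}"

lemma finite_maximal_qp_subloops: "finite (maximal_qp_subloops w)"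
proof (rule finite_subset)
  show "maximal_qp_subloops w \<subseteq> {..length w} \<times> {..length w}"
    by (auto simp: maximal_qp_subloops_def qp_subloop_def)
qed simp

lemma maximal_qp_subloops_overlap:
  assumes "(a, b) \<in> maximal_qp_subloops w" "(c, d) \<in> maximal_qp_subloops w"
    and "{a..<b} \<inter> {c..<d} \<noteq> {}"
  shows "(a, b) = (c, d)"
proof -
  have "c < b" "a < d" using assms(3) by auto
  then have "a \<le> c \<and> d \<le> b" "c \<le> a \<and> b \<le> d"
    using assms(1,2) unfolding maximal_qp_subloops_def by blast+
  then show ?thesis by simp
qed

lemma disjoint_maximal_qp_subloops:
  "disjoint_family_on (\<lambda>(a, b). {a..<b}) (maximal_qp_subloops w)"
  unfolding disjoint_family_on_def
  by (auto dest: maximal_qp_subloops_overlap)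

lemma covered_steps_eq_maximal_qp_subloops:
  "covered_steps w = (\<Union>(a, b)\<in>maximal_qp_subloops w. {a..<b})"
proof
  show "(\<Union>(a, b)\<in>maximal_qp_subloops w. {a..<b}) \<subseteq> covered_steps w"
    by (fastforce simp: maximal_qp_subloops_def covered_steps_def)
next
  show "covered_steps w \<subseteq> (\<Union>(a, b)\<in>maximal_qp_subloops w. {a..<b})"
  proof
    fix k assume "k \<in> covered_steps w"
    let ?around_k = "\<lambda>(i, j). qp_subloop w i j \<and> i \<le> k \<and> k < j"
    obtain ij where "?around_k ij"
      using \<open>k \<in> covered_steps w\<close> by (auto simp: covered_steps_def)
    moreover have "\<forall>ij. ?around_k ij \<longrightarrow> (\<lambda>(i, j). j - i) ij < Suc (length w)"
      by (auto simp: qp_subloop_def)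
    ultimately have "\<exists>ab. ?around_k ab \<and> (\<forall>ij. ?around_k ij \<longrightarrow> (\<lambda>(i, j). j - i) ij \<le> (\<lambda>(i, j). j - i) ab)"
      by (rule Lattices_Big.ex_has_greatest_nat)
    then obtain a b where ab: "?around_k (a, b)"
      and longest: "\<And>i j. ?around_k (i, j) \<Longrightarrow> j - i \<le> b - a"
      by fastforce
    have "a \<le> c \<and> d \<le> b" if "qp_subloop w c d" "c < b" "a < d" for c d
    proof -
      have "?around_k (min a c, max b d)"
        using qp_subloop_union[of w a b c d] ab that by auto
      then show ?thesis using longest[of "min a c" "max b d"] ab by auto
    qed
    with ab show "k \<in> (\<Union>(a, b)\<in>maximal_qp_subloops w. {a..<b})"
      by (auto simp: maximal_qp_subloops_def)
  qed
qed

lemma swap_le_swap_iff [simp]: "prod.swap p \<le> prod.swap q \<longleftrightarrow> p \<le> q"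
  by (auto simp: less_eq_prod_def)

lemma qp_subloop_map_swap_step: "qp_subloop (map swap_step w) = qp_subloop w"
  by (intro ext) (simp add: qp_subloop_iff_quadrant_loop quadrant_loop_def pos_map_swap_step inj_eq)

definition swap_free_steps :: "step list \<Rightarrow> step list" where
  "swap_free_steps w = swap_steps (- covered_steps w) w"

lemma length_swap_free_steps [simp]: "length (swap_free_steps w) = length w"
  by (simp add: swap_free_steps_def)

lemma nth_swap_free_steps:
  "k < length w \<Longrightarrow> swap_free_steps w ! k = (if k \<in> covered_steps w then w ! k else swap_step (w ! k))"
  by (simp add: swap_free_steps_def)

lemma swap_free_steps_loops_and_end:
  "qp_subloop (swap_free_steps w) = qp_subloop w \<and>
   pos (swap_free_steps w) (length w) = prod.swap (pos w (length w))"
proof -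
  have loops: "\<forall>(a, b)\<in>maximal_qp_subloops w. qp_subloop (map swap_step w) a b"
    by (auto simp: maximal_qp_subloops_def qp_subloop_map_swap_step)
  have "swap_free_steps w = swap_steps (covered_steps w) (map swap_step w)"
    by (rule nth_equalityI) (auto simp: nth_swap_free_steps)
  then show ?thesis
    using swap_steps_disjoint_qp_subloops[OF finite_maximal_qp_subloops disjoint_maximal_qp_subloops loops]
    by (simp add: covered_steps_eq_maximal_qp_subloops qp_subloop_map_swap_step pos_map_swap_step)
qed

lemma qp_subloop_swap_free_steps [simp]: "qp_subloop (swap_free_steps w) = qp_subloop w"
  using swap_free_steps_loops_and_end by blast

lemma pos_swap_free_steps_end:
  "pos (swap_free_steps w) (length w) = prod.swap (pos w (length w))"
  using swap_free_steps_loops_and_end by blast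

lemma covered_steps_swap_free_steps [simp]: "covered_steps (swap_free_steps w) = covered_steps w"
  by (simp add: covered_steps_def)

lemma swap_free_steps_swap_free_steps [simp]: "swap_free_steps (swap_free_steps w) = w"
  by (rule nth_equalityI) (auto simp: nth_swap_free_steps)

lemma pos_diagonal:
  "fst (pos w k) + snd (pos w k) = sum_list (map (\<lambda>s. dx s + dy s) (take k w))"
  by (simp add: pos_def sum_list_addf)

lemma pos_diagonal_swap_free_steps:
  "fst (pos (swap_free_steps w) k) + snd (pos (swap_free_steps w) k) = fst (pos w k) + snd (pos w k)"
proof -
  have "dx (swap_step s) + dy (swap_step s) = dx s + dy s" for s
    by (cases s) auto
  then have "map (\<lambda>s. dx s + dy s) (swap_free_steps w) = map (\<lambda>s. dx s + dy s) w"
    by (intro nth_equalityI) (auto simp: nth_swap_free_steps)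
  then show ?thesis
    by (simp add: pos_diagonal flip: take_map)
qed

lemma qp_subloop_first_step:
  assumes "qp_subloop w i j" "i < j"
  shows "w ! i = N \<or> w ! i = E"
proof -
  have "i < length w" "pos w i \<le> pos w (Suc i)"
    using assms by (auto simp: qp_subloop_iff_quadrant_loop quadrant_loop_def)
  then show ?thesis by (cases "w ! i") (auto simp: pos_Suc step_vec_def less_eq_prod_def prod_eq_iff)
qed

lemma qp_subloop_last_step:
  assumes "qp_subloop w i (Suc k)" "i \<le> k"
  shows "w ! k = S \<or> w ! k = W"
proof -
  have "k < length w" "pos w i \<le> pos w k" "pos w (Suc k) = pos w i"
    using assms by (auto simp: qp_subloop_iff_quadrant_loop quadrant_loop_def)
  then show ?thesis by (cases "w ! k") (auto simp: pos_Suc step_vec_def less_eq_prod_def prod_eq_iff)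
qed

lemma step_entering_covered_steps:
  assumes "Suc k \<in> covered_steps w" "k \<notin> covered_steps w"
  shows "w ! Suc k = N \<or> w ! Suc k = E"
proof -
  obtain i j where loop: "qp_subloop w i j" "i \<le> Suc k" "Suc k < j"
    using assms(1) by (auto simp: covered_steps_def)
  have "\<not> i \<le> k"
    using assms(2) loop Suc_lessD unfolding covered_steps_def by blast
  with loop have "i = Suc k" by simp
  with loop show ?thesis using qp_subloop_first_step by blast
qed

lemma step_leaving_covered_steps:
  assumes "k \<in> covered_steps w" "Suc k \<notin> covered_steps w"
  shows "w ! k = S \<or> w ! k = W"
proof -
  obtain i j where loop: "qp_subloop w i j" "i \<le> k" "k < j"
    using assms(1) by (auto simp: covered_steps_def)
  have "\<not> Suc k < j"
    using assms(2) loop le_SucI unfolding covered_steps_def by blast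
  with loop have "j = Suc k" by simp
  with loop show ?thesis using qp_subloop_last_step by blast
qed

lemma eager_swap_free_steps:
  assumes "eager w"
  shows "eager (swap_free_steps w)"
  unfolding eager_def
proof (intro allI impI)
  fix k assume "Suc k < length (swap_free_steps w)"
  then have k: "k < length w" "Suc k < length w" by simp_all
  show "\<not> (swap_free_steps w ! k = E \<and> swap_free_steps w ! Suc k = S) \<and>
        \<not> (swap_free_steps w ! k = N \<and> swap_free_steps w ! Suc k = W)"
  proof (cases "k \<in> covered_steps w"; cases "Suc k \<in> covered_steps w")
    assume "k \<in> covered_steps w" "Suc k \<in> covered_steps w"
    with assms k show ?thesis by (simp add: nth_swap_free_steps eager_def)
  next
    assume "k \<in> covered_steps w" "Suc k \<notin> covered_steps w"
    with k show ?thesis by (auto simp: nth_swap_free_steps dest: step_leaving_covered_steps)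
  next
    assume "k \<notin> covered_steps w" "Suc k \<in> covered_steps w"
    with k show ?thesis by (auto simp: nth_swap_free_steps dest: step_entering_covered_steps)
  next
    assume "k \<notin> covered_steps w" "Suc k \<notin> covered_steps w"
    with assms k show ?thesis
      by (cases "w ! k"; cases "w ! Suc k") (auto simp: nth_swap_free_steps eager_def)
  qed
qed

lemma standard_swap_free_steps:
  assumes "standard w"
  shows "standard (swap_free_steps w)"
  unfolding standard_def
proof (intro allI impI)
  fix i j assume "i < j \<and> qp_subloop (swap_free_steps w) i j"
  then have loop: "i < j" "qp_subloop w i j" by simp_all
  have "i \<in> covered_steps w"
    using loop unfolding covered_steps_def by blast
  moreover have "i < length w"
    using loop by (simp add: qp_subloop_def)
  moreover have "w ! i = N"
    using assms loop by (auto simp: standard_def)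
  ultimately show "swap_free_steps w ! i = N"
    by (simp add: nth_swap_free_steps)
qed

lemma big_walk_swap_free_steps: "big_walk w \<Longrightarrow> big_walk (swap_free_steps w)"
  by (simp add: big_walk_def eager_swap_free_steps standard_swap_free_steps pos_diagonal_swap_free_steps)

lemma fst_pos_end_swap_free_steps:
  "big_walk w \<Longrightarrow> fst (pos (swap_free_steps w) (length w)) = - fst (pos w (length w))"
  by (simp add: pos_swap_free_steps_end big_walk_def)

lemma right_walk_swap_free_steps: "left_walk w \<Longrightarrow> right_walk (swap_free_steps w)"
  by (simp add: left_walk_def right_walk_def big_walk_swap_free_steps fst_pos_end_swap_free_steps)

lemma left_walk_swap_free_steps: "right_walk w \<Longrightarrow> left_walk (swap_free_steps w)"
  by (simp add: left_walk_def right_walk_def big_walk_swap_free_steps fst_pos_end_swap_free_steps)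

theorem lemma2p1:
  fixes n :: nat
  shows "card {w. length w = 2 * n \<and> left_walk w} = card {w. length w = 2 * n \<and> right_walk w}"
proof (rule bij_betw_same_card)
  show "bij_betw swap_free_steps {w. length w = 2 * n \<and> left_walk w} {w. length w = 2 * n \<and> right_walk w}"
    by (rule bij_betw_byWitness[where f' = swap_free_steps])
      (auto simp: right_walk_swap_free_steps left_walk_swap_free_steps)
qed

end
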